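(* Setting: integers $N,Q,S\ge1$, $1\le M\le N$, $J\ge1$; $\mathbf{H}\in\mathbb{R}^{Q\times N}\setminus\{\mathbf{0}\}$, $\mathbf{y}\in\mathbb{R}^Q$, a real matrix $\mathbf{V}_0$ with $N$ columns, and for $s\in\{1,\dots,S\}$: $P_s\ge1$, $\mathbf{V}_s\in\mathbb{R}^{P_s\times N}$, $\mathbf{c}_s\in\mathbb{R}^{P_s}$; $\Phi:\mathbb{R}^Q\to\mathbb{R}$; a fixed $\delta>0$ and functions $\psi_{s,\delta}:\mathbb{R}\to\mathbb{R}$; $F_\delta(\mathbf{x})=\Phi(\mathbf{H}\mathbf{x}-\mathbf{y})+\sum_{s=1}^S\psi_{s,\delta}(\|\mathbf{V}_s\mathbf{x}-\mathbf{c}_s\|)+\|\mathbf{V}_0\mathbf{x}\|^2$. Assume: (A3i) $\Phi$ is differentiable with $L$-Lipschitz gradient; (A3ii) each $\psi_{s,\delta}$ is differentiable; (A3iii) each $t\mapsto\psi_{s,\delta}(\sqrt t)$ is concave on $[0,+\infty)$; (A3iv) for each $s$ there is $\overline\omega_s\in[0,+\infty)$ with $0\le\dot\psi_{s,\delta}(t)\le\overline\omega_s t$ for all $t>0$, and $\lim_{t\to0}\dot\psi_{s,\delta}(t)/t\in\mathbb{R}$. Let $\omega_{s,\delta}(t)=\dot\psi_{s,\delta}(t)/t$, extended by continuity at $0$, fix $\mu\in[L,+\infty)$ and set, for $\mathbf{x}\in\mathbb{R}^N$, $\mathbf{A}(\mathbf{x})=\mu\mathbf{H}^\top\mathbf{H}+2\mathbf{V}_0^\top\mathbf{V}_0+\mathbf{V}^\top\operatorname{Diag}\{\mathbf{b}(\mathbf{x})\}\mathbf{V}$,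 where $\mathbf{V}=[\mathbf{V}_1^\top|\cdots|\mathbf{V}_S^\top]^\top$ and $\mathbf{b}(\mathbf{x})$ has entry $b_{P_1+\dots+P_{s-1}+p}(\mathbf{x})=\omega_{s,\delta}(\|\mathbf{V}_s\mathbf{x}-\mathbf{c}_s\|)$ for $p\in\{1,\dots,P_s\}$. Consider the iteration: $\mathbf{x}_0\in\mathbb{R}^N$; for each $k\in\mathbb{N}$, given a matrix $\mathbf{D}_k\in\mathbb{R}^{N\times M}$, set $\mathbf{u}_k^0=\mathbf{0}$ and for $j=1,\dots,J$: $\mathbf{B}_k^{j-1}=\mathbf{D}_k^\top\mathbf{A}(\mathbf{x}_k+\mathbf{D}_k\mathbf{u}_k^{j-1})\mathbf{D}_k$, $\mathbf{u}_k^j=\mathbf{u}_k^{j-1}-(\mathbf{B}_k^{j-1})^{\dagger}\mathbf{D}_k^\top\nabla F_\delta(\mathbf{x}_k+\mathbf{D}_k\mathbf{u}_k^{j-1})$ (with $\dagger$ the Moore–Penrose pseudo-inverse); then $\mathbf{x}_{k+1}=\mathbf{x}_k+\mathbf{D}_k\mathbf{u}_k^J$. Write $\mathbf{x}_k^j=\mathbf{x}_k+\mathbf{D}_k\mathbf{u}_k^j$ and $\mathbf{g}_k=\nabla F_\delta(\mathbf{x}_k)$. Assume further (A4) there exist $\gamma_0>0,\gamma_1>0$ such that for every $k$ the first column $\mathbf{d}_k^1$ of $\mathbf{D}_k$ satisfies $\mathbf{g}_k^\top\mathbf{d}_k^1\le-\gamma_0\|\mathbf{g}_k\|^2$ and $\|\mathbf{d}_k^1\|\le\gamma_1\|\mathbf{g}_k\|$.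 Claim: there exists a constant $\nu>0$ such that for every $k\in\mathbb{N}$ and every $j\in\{1,\dots,J\}$, $$F_\delta(\mathbf{x}_k)-F_\delta(\mathbf{x}_k^j)\ge\frac{\gamma_0^2}{\gamma_1}\nu^{-1}\|\mathbf{g}_k\|^2.$$
   Context: $\|\cdot\|$ is the Euclidean norm; $\dot\psi_{s,\delta}$ is the derivative of $\psi_{s,\delta}$. *)

theory Defs
  imports "HOL-Analysis.Analysis"
begin

definition grad :: "('a::euclidean_space \<Rightarrow> real) \<Rightarrow> 'a \<Rightarrow> 'a" where
  "grad f x = (THE g. (f has_derivative (\<lambda>h. g \<bullet> h)) (at x))"

definition pinv :: "real^'b^'a \<Rightarrow> real^'a^'b" where
  "pinv A = (THE X. A ** X ** A = A \<and> X ** A ** X = X \<and>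
                    transpose (A ** X) = A ** X \<and> transpose (X ** A) = X ** A)"

definition diagm :: "real^'p \<Rightarrow> real^'p^'p" where
  "diagm b = (\<chi> i j. if i = j then b $ i else 0)"

text \<open>The stacked matrix V has row index type 'p; grp i = s means row i belongs to
  block V_s.  blk_norm grp s z is the Euclidean norm of the s-th block of z.\<close>
definition blk_norm :: "('p::finite \<Rightarrow> nat) \<Rightarrow> nat \<Rightarrow> real^'p \<Rightarrow> real" where
  "blk_norm grp s z = sqrt (\<Sum>i\<in>{i. grp i = s}. (z $ i)^2)"

definition Fdelta ::
  "(real^'q \<Rightarrow> real) \<Rightarrow> real^'n^'q \<Rightarrow> real^'q \<Rightarrow> (nat \<Rightarrow> real \<Rightarrow> real) \<Rightarrow> nat
   \<Rightarrow> ('p::finite \<Rightarrow> nat) \<Rightarrow> real^'n^'p \<Rightarrow> real^'p \<Rightarrow> real^'n^'r \<Rightarrow> real^'n \<Rightarrow> real" where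
  "Fdelta \<Phi> H y \<psi> S grp V c V0 x =
     \<Phi> (H *v x - y) + (\<Sum>s=1..S. \<psi> s (blk_norm grp s (V *v x - c))) + (norm (V0 *v x))^2"

definition omega :: "(nat \<Rightarrow> real \<Rightarrow> real) \<Rightarrow> nat \<Rightarrow> real \<Rightarrow> real" where
  "omega \<psi> s t = (if t = 0 then Lim (at 0) (\<lambda>t. deriv (\<psi> s) t / t) else deriv (\<psi> s) t / t)"

definition Amat ::
  "real \<Rightarrow> real^'n^'q \<Rightarrow> real^'n^'r \<Rightarrow> (nat \<Rightarrow> real \<Rightarrow> real) \<Rightarrow> ('p::finite \<Rightarrow> nat)
   \<Rightarrow> real^'n^'p \<Rightarrow> real^'p \<Rightarrow> real^'n \<Rightarrow> real^'n^'n" where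
  "Amat \<mu> H V0 \<psi> grp V c x =
     \<mu> *\<^sub>R (transpose H ** H) + 2 *\<^sub>R (transpose V0 ** V0)
     + transpose V ** diagm (\<chi> i. omega \<psi> (grp i) (blk_norm grp (grp i) (V *v x - c))) ** V"

end

theory Submission
  imports Defs
begin

text \<open>At every point x, F_\<delta> is majorized by the quadratic
  h \<mapsto> F_\<delta> x + \<nabla>F_\<delta> x \<bullet> h + h \<bullet> A(x) h / 2:
  the data term by the descent lemma (\<mu> \<ge> L), each potential \<psi>_s by its tangent in the variable
  t = r^2, in which it is concave, and the V_0 term exactly. Every inner iteration minimizes this
  majorant over x_k^j + range D_k (this is what the pseudo-inverse step computes), so F_\<delta> never
  increases along the inner iterations, and the first one does at least as well as the best step
  along the column d_k^1. Since A(x) \<le> \<nu> I uniformly, condition (A4) makes that step decrease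
  F_\<delta> by \<gamma>_0^2 / (2 \<nu> \<gamma>_1^2) \<parallel>g_k\<parallel>^2.\<close>

section \<open>Symmetric matrices and the Moore--Penrose pseudo-inverse\<close>

declare transpose_matrix_vector [simp del]

lemma inner_transpose_matrix_vector:
  "(transpose M *v a) \<bullet> w = a \<bullet> ((M::real^'n^'m) *v w)"
  by (simp add: dot_lmul_matrix transpose_matrix_vector)

lemma inner_matrix_vector_transpose:
  "((M::real^'n^'m) *v v) \<bullet> w = v \<bullet> (transpose M *v w)"
  by (metis inner_commute inner_transpose_matrix_vector)

lemma symmetric_matrix_iff:
  fixes M :: "real^'n^'n"
  shows "transpose M = M \<longleftrightarrow> (\<forall>v w. (M *v v) \<bullet> w = v \<bullet> (M *v w))"
proof
  assume "\<forall>v w. (M *v v) \<bullet> w = v \<bullet> (M *v w)"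
  then have orth: "v \<bullet> (transpose M *v w - M *v w) = 0" for v w
    by (simp add: inner_diff_right flip: inner_matrix_vector_transpose)
  have "transpose M *v w = M *v w" for w
    using orth[of "transpose M *v w - M *v w" w] by simp
  then show "transpose M = M"
    by (simp add: matrix_eq)
qed (metis inner_matrix_vector_transpose)

lemma quadratic_form_congruence:
  fixes A :: "real^'n^'n" and D :: "real^'m^'n"
  shows "v \<bullet> ((transpose D ** A ** D) *v v) = (A *v (D *v v)) \<bullet> (D *v v)"
proof -
  have "(transpose D ** A ** D) *v v = transpose D *v (A *v (D *v v))"
    by (simp add: matrix_vector_mul_assoc matrix_mul_assoc)
  then show ?thesis
    by (simp add: inner_transpose_matrix_vector inner_commute[of v])
qed

definition is_pinv :: "real^'b^'a \<Rightarrow> real^'a^'b \<Rightarrow> bool" where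
  "is_pinv A X \<longleftrightarrow> A ** X ** A = A \<and> X ** A ** X = X \<and>
     transpose (A ** X) = A ** X \<and> transpose (X ** A) = X ** A"

lemma is_pinv_unique:
  assumes "is_pinv A X" "is_pinv A Y"
  shows "X = Y"
proof -
  from assms have a1: "A ** X ** A = A" and a2: "X ** A ** X = X"
    and a3: "transpose (A ** X) = A ** X" and a4: "transpose (X ** A) = X ** A"
    and b1: "A ** Y ** A = A" and b2: "Y ** A ** Y = Y"
    and b3: "transpose (A ** Y) = A ** Y" and b4: "transpose (Y ** A) = Y ** A"
    by (auto simp: is_pinv_def)
  have "X = X ** (transpose X ** transpose A)"
    by (metis a2 a3 matrix_mul_assoc matrix_transpose_mul)
  moreover have "transpose A = transpose A ** (A ** Y)"
    by (metis b1 b3 matrix_transpose_mul)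
  ultimately have X: "X = X ** A ** Y"
    by (metis matrix_mul_assoc)
  have "Y = (transpose A ** transpose Y) ** Y"
    by (metis b2 b4 matrix_transpose_mul)
  moreover have "transpose A = (X ** A) ** transpose A"
    by (metis a1 a4 matrix_mul_assoc matrix_transpose_mul)
  ultimately have "Y = X ** A ** (transpose A ** transpose Y) ** Y"
    by (metis matrix_mul_assoc)
  then have "Y = X ** A ** Y"
    by (metis b2 b4 matrix_mul_assoc matrix_transpose_mul)
  with X show ?thesis by simp
qed

lemma pinv_eqI: "is_pinv A X \<Longrightarrow> pinv A = X"
  unfolding pinv_def is_pinv_def[symmetric] using is_pinv_unique by blast

text \<open>A symmetric matrix is injective on its range, which is the orthogonal complement of its
  kernel; a linear inverse there yields the pseudo-inverse.\<close>
lemma symmetric_matrix_range_inverse: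
  fixes B :: "real^'n^'n"
  assumes "transpose B = B"
  obtains g where "linear g" "\<And>v. g v \<in> range ((*v) B)"
    "\<And>v. v \<in> range ((*v) B) \<Longrightarrow> g (B *v v) = v"
    "\<And>z. z \<in> range ((*v) B) \<Longrightarrow> B *v g z = z"
proof -
  define R where "R = range ((*v) B)"
  have sym: "(B *v v) \<bullet> w = v \<bullet> (B *v w)" for v w
    using assms[unfolded symmetric_matrix_iff] by blast
  have "subspace R"
    unfolding R_def by (intro linear_subspace_image matrix_vector_mul_linear subspace_UNIV)
  then have span_R: "span R = R"
    by (simp add: span_eq_iff)
  have kernel: "B *v v = 0" if "\<And>w. w \<in> R \<Longrightarrow> v \<bullet> w = 0" for v
    using that[of "B *v (B *v v)"] sym[of v "B *v v"] by (simp add: R_def)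
  have "inj_on ((*v) B) R"
  proof (rule inj_onI)
    fix a b assume ab: "a \<in> R" "b \<in> R" "B *v a = B *v b"
    then have "a - b \<in> R" using \<open>subspace R\<close> by (simp add: subspace_diff)
    then obtain e where e: "a - b = B *v e" by (auto simp: R_def)
    have "B *v (a - b) = 0" using ab(3) by (simp add: matrix_vector_mult_diff_distrib)
    then have "(a - b) \<bullet> (a - b) = 0" using sym[of e "a - b"] e by simp
    then show "a = b" by simp
  qed
  then obtain g where g: "range g \<subseteq> R" "linear g" "\<forall>v\<in>R. g (B *v v) = v"
    using linear_exists_left_inverse_on[OF matrix_vector_mul_linear \<open>subspace R\<close>] by blast
  have right_inverse: "B *v g z = z" if "z \<in> R" for z
  proof -
    obtain y where y: "z = B *v y" using \<open>z \<in> R\<close> by (auto simp: R_def)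
    obtain y1 y2 where y12: "y1 \<in> R" "\<And>w. w \<in> R \<Longrightarrow> orthogonal y2 w" "y = y1 + y2"
      using orthogonal_subspace_decomp_exists[of R y] span_R by metis
    have "B *v y2 = 0" using y12(2) by (intro kernel) (auto simp: orthogonal_def)
    then have "z = B *v y1" using y y12(3) by (simp add: matrix_vector_right_distrib)
    then show ?thesis using g(3) y12(1) by simp
  qed
  show ?thesis
    using g right_inverse unfolding R_def by (intro that) auto
qed

lemma is_pinv_symmetric_exists:
  fixes B :: "real^'n^'n"
  assumes symB: "transpose B = B"
  shows "\<exists>X. is_pinv B X"
proof -
  obtain g where g: "linear g" "\<And>v. g v \<in> range ((*v) B)"
    "\<And>v. v \<in> range ((*v) B) \<Longrightarrow> g (B *v v) = v"
    "\<And>z. z \<in> range ((*v) B) \<Longrightarrow> B *v g z = z"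
    using symmetric_matrix_range_inverse[OF symB] by blast
  have sym: "(B *v v) \<bullet> w = v \<bullet> (B *v w)" for v w
    using symB[unfolded symmetric_matrix_iff] by blast
  \<comment> \<open>P is the orthogonal projection onto the range of B\<close>
  define P where "P v = g (B *v v)" for v
  have P_range: "P v \<in> range ((*v) B)" for v by (simp add: P_def g(2))
  have B_P: "B *v P v = B *v v" for v by (simp add: P_def g(4))
  have P_B: "P (B *v v) = B *v v" for v by (simp add: P_def g(3))
  have P_orth: "(v - P v) \<bullet> (B *v w) = 0" for v w
    by (simp add: sym matrix_vector_mult_diff_distrib B_P flip: inner_commute)
  have P_sym: "P v \<bullet> w = v \<bullet> P w" for v w
  proof -
    obtain a b where "P v = B *v a" "P w = B *v b" using P_range by (metis image_iff)
    then have "P v \<bullet> (w - P w) = 0" "(v - P v) \<bullet> P w = 0"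
      using P_orth[of w a] P_orth[of v b] by (simp_all add: inner_commute)
    then show ?thesis by (simp add: inner_diff_left inner_diff_right)
  qed
  define X where "X = matrix g ** matrix g ** B"
  have X_apply: "X *v v = g (P v)" for v
    using g(1) by (simp add: X_def P_def matrix_works flip: matrix_vector_mul_assoc)
  have B_X: "B *v (X *v v) = P v" for v by (simp add: X_apply g(4) P_range)
  have X_B: "X *v (B *v v) = P v" for v by (simp add: X_apply P_B) (simp add: P_def)
  have P_idem: "P (P v) = P v" for v by (metis P_def B_P)
  have "X *v (B *v (X *v v)) = X *v v" for v
    by (simp only: B_X) (simp add: X_apply P_idem)
  then have "is_pinv B X"
    unfolding is_pinv_def symmetric_matrix_iff
    by (simp add: matrix_eq B_X X_B B_P P_sym flip: matrix_vector_mul_assoc)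
  then show ?thesis by blast
qed

lemma pinv_symmetric:
  fixes B :: "real^'n^'n"
  assumes symB: "transpose B = B"
  shows "is_pinv B (pinv B)" and "transpose (pinv B) = pinv B"
proof -
  obtain X where X: "is_pinv B X" using is_pinv_symmetric_exists[OF symB] by blast
  then show "is_pinv B (pinv B)" by (simp add: pinv_eqI)
  have "is_pinv B (transpose X)"
    unfolding is_pinv_def
  proof (intro conjI)
    have "B ** X ** B = B" "X ** B ** X = X" "transpose (B ** X) = B ** X"
      "transpose (X ** B) = X ** B"
      using X by (simp_all add: is_pinv_def)
    then show "B ** transpose X ** B = B" "transpose X ** B ** transpose X = transpose X"
      "transpose (B ** transpose X) = B ** transpose X"
      "transpose (transpose X ** B) = transpose X ** B"
      using symB by (metis matrix_transpose_mul matrix_mul_assoc)+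
  qed
  then show "transpose (pinv B) = pinv B"
    using X by (simp add: pinv_eqI is_pinv_unique)
qed

lemma pinv_quadratic_form_eq:
  fixes B :: "real^'n^'n"
  assumes "transpose B = B"
  shows "r \<bullet> (pinv B *v r) = (pinv B *v r) \<bullet> (B *v (pinv B *v r))"
proof -
  have "pinv B ** B ** pinv B = pinv B"
    using pinv_symmetric(1)[OF assms] by (simp add: is_pinv_def)
  then have "r \<bullet> (pinv B *v r) = r \<bullet> (pinv B *v (B *v (pinv B *v r)))"
    by (simp add: matrix_vector_mul_assoc matrix_mul_assoc)
  also have "\<dots> = (pinv B *v r) \<bullet> (B *v (pinv B *v r))"
    using pinv_symmetric(2)[OF assms] unfolding symmetric_matrix_iff by simp
  finally show ?thesis .
qed

lemma pinv_minimizes_quadratic_model: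
  fixes B :: "real^'n^'n"
  assumes symB: "transpose B = B" and psd: "\<And>v. 0 \<le> v \<bullet> (B *v v)"
    and kernel: "\<And>k. B *v k = 0 \<Longrightarrow> r \<bullet> k = 0"
  shows "- (1/2) * (r \<bullet> (pinv B *v r)) \<le> r \<bullet> v + 1/2 * (v \<bullet> (B *v v))"
proof -
  define w where "w = pinv B *v r"
  have sym: "(B *v a) \<bullet> b = a \<bullet> (B *v b)" for a b
    using symB[unfolded symmetric_matrix_iff] by blast
  have BXB: "B ** pinv B ** B = B" and "transpose (B ** pinv B) = B ** pinv B"
    using pinv_symmetric(1)[OF symB] by (simp_all add: is_pinv_def)
  then have "B ** pinv B = pinv B ** B"
    using pinv_symmetric(2)[OF symB] symB by (metis matrix_transpose_mul)
  with BXB have "B ** (B ** pinv B) = B"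
    by (metis matrix_mul_assoc)
  then have "B *v (B *v w) = B *v r"
    by (simp add: w_def matrix_vector_mul_assoc)
  then have "B *v (r - B *v w) = 0"
    by (simp add: matrix_vector_mult_diff_distrib)
  then have "(r - B *v w) \<bullet> (r - B *v w) = 0"
    using kernel sym[of w "r - B *v w"] by (simp add: inner_diff_left)
  then have r_range: "r = B *v w" by simp
  have cross: "v \<bullet> (B *v w) = r \<bullet> v" "w \<bullet> (B *v v) = r \<bullet> v"
    using r_range sym[of w v] by (simp_all add: inner_commute)
  have "0 \<le> (v + w) \<bullet> (B *v (v + w))" by (rule psd)
  also have "\<dots> = v \<bullet> (B *v v) + 2 * (r \<bullet> v) + w \<bullet> (B *v w)"
    by (simp add: matrix_vector_right_distrib inner_add_left inner_add_right cross)
  finally show ?thesis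
    using pinv_quadratic_form_eq[OF symB, of r] by (simp add: w_def)
qed

section \<open>Minimizing a quadratic majorant over a subspace\<close>

locale quadratic_majorant =
  fixes F :: "real^'n \<Rightarrow> real" and g :: "real^'n \<Rightarrow> real^'n" and A :: "real^'n \<Rightarrow> real^'n^'n"
  assumes majorant: "F (x + h) \<le> F x + g x \<bullet> h + 1/2 * ((A x *v h) \<bullet> h)"
    and symmetric: "transpose (A x) = A x"
    and nonneg: "0 \<le> (A x *v h) \<bullet> h"
    and gradient_orthogonal_kernel: "(A x *v h) \<bullet> h = 0 \<Longrightarrow> g x \<bullet> h = 0"
begin

text \<open>x - D *v subspace_step D x minimizes the quadratic majorant at x over x + range D.\<close>
definition subspace_step :: "real^'m^'n \<Rightarrow> real^'n \<Rightarrow> real^'m" where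
  "subspace_step D x = pinv (transpose D ** A x ** D) *v (transpose D *v g x)"

lemma subspace_step_le_model:
  fixes D :: "real^'m^'n"
  shows "F (x - D *v subspace_step D x)
           \<le> F x + g x \<bullet> (D *v v) + 1/2 * ((A x *v (D *v v)) \<bullet> (D *v v))"
proof -
  define B where "B = transpose D ** A x ** D"
  define r where "r = transpose D *v g x"
  define s where "s = pinv B *v r"
  have quad: "a \<bullet> (B *v a) = (A x *v (D *v a)) \<bullet> (D *v a)" for a
    unfolding B_def by (rule quadratic_form_congruence)
  have lin: "g x \<bullet> (D *v a) = r \<bullet> a" for a
    by (simp add: r_def inner_transpose_matrix_vector)
  have symB: "transpose B = B"
    by (simp add: B_def matrix_transpose_mul symmetric matrix_mul_assoc)
  have psd: "0 \<le> a \<bullet> (B *v a)" for a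
    by (simp add: quad nonneg)
  have kernel: "r \<bullet> k = 0" if "B *v k = 0" for k
    using that quad[of k] gradient_orthogonal_kernel[of x "D *v k"] by (simp add: lin)
  have "F (x - D *v s) \<le> F x + g x \<bullet> (D *v - s) + 1/2 * ((A x *v (D *v - s)) \<bullet> (D *v - s))"
    using majorant[of x "D *v - s"] by (simp add: vec.neg)
  also have "\<dots> = F x - 1/2 * (r \<bullet> s)"
    using pinv_quadratic_form_eq[OF symB, of r]
    by (simp add: lin s_def vec.neg flip: quad)
  also have "\<dots> \<le> F x + r \<bullet> v + 1/2 * (v \<bullet> (B *v v))"
    using pinv_minimizes_quadratic_model[OF symB psd kernel] by (simp add: s_def)
  finally show ?thesis
    unfolding subspace_step_def lin quad[symmetric] by (simp add: B_def r_def s_def)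
qed

lemma subspace_step_nonincreasing:
  fixes D :: "real^'m^'n"
  shows "F (x - D *v subspace_step D x) \<le> F x"
  using subspace_step_le_model[of x D 0] by simp

text \<open>Compare with the step along column i of D of length \<gamma>0 / (\<nu> \<gamma>1^2), which minimizes
  the resulting upper bound.\<close>
lemma subspace_step_sufficient_decrease:
  fixes D :: "real^'m^'n"
  assumes bounded: "\<And>v. (A x *v v) \<bullet> v \<le> \<nu> * (norm v)^2" and "\<nu> > 0"
    and descent: "g x \<bullet> column i D \<le> - \<gamma>0 * (norm (g x))^2"
    and length: "norm (column i D) \<le> \<gamma>1 * norm (g x)"
    and "\<gamma>0 > 0" "\<gamma>1 > 0"
  shows "F (x - D *v subspace_step D x) \<le> F x - \<gamma>0^2 / (2 * \<nu> * \<gamma>1^2) * (norm (g x))^2"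
proof -
  define d where "d = column i D"
  define t where "t = \<gamma>0 / (\<nu> * \<gamma>1^2)"
  have t: "t > 0" using assms by (simp add: t_def)
  have Dv: "D *v (t *\<^sub>R axis i 1) = t *\<^sub>R d"
    unfolding d_def by (metis matrix_scaleR_vector_ac scaleR_matrix_vector_assoc matrix_vector_mult_basis)
  have "A x *v (t *\<^sub>R d) = t *\<^sub>R (A x *v d)"
    by (metis matrix_scaleR_vector_ac scaleR_matrix_vector_assoc)
  then have "(A x *v (t *\<^sub>R d)) \<bullet> (t *\<^sub>R d) = t^2 * ((A x *v d) \<bullet> d)"
    by (simp only: inner_scaleR_left inner_scaleR_right power2_eq_square mult.assoc)
  also have "\<dots> \<le> t^2 * (\<nu> * (\<gamma>1 * norm (g x))^2)"
  proof (rule mult_left_mono)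
    have "(norm d)^2 \<le> (\<gamma>1 * norm (g x))^2"
      using length by (simp add: d_def power_mono)
    then have "\<nu> * (norm d)^2 \<le> \<nu> * (\<gamma>1 * norm (g x))^2"
      using \<open>\<nu> > 0\<close> by simp
    then show "(A x *v d) \<bullet> d \<le> \<nu> * (\<gamma>1 * norm (g x))^2"
      using bounded[of d] by linarith
  qed simp
  finally have quad: "(A x *v (t *\<^sub>R d)) \<bullet> (t *\<^sub>R d) \<le> t^2 * (\<nu> * (\<gamma>1 * norm (g x))^2)" .
  have lin: "g x \<bullet> (t *\<^sub>R d) \<le> t * (- \<gamma>0 * (norm (g x))^2)"
    using mult_left_mono[OF descent, of t] t by (simp add: d_def)
  have "t * (- \<gamma>0 * (norm (g x))^2) + 1/2 * (t^2 * (\<nu> * (\<gamma>1 * norm (g x))^2))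
      = - (\<gamma>0^2 / (2 * \<nu> * \<gamma>1^2) * (norm (g x))^2)"
    using assms by (simp add: t_def field_simps power2_eq_square)
  then show ?thesis
    using subspace_step_le_model[of x D "t *\<^sub>R axis i 1"] lin quad by (simp add: Dv)
qed

lemma subspace_iterates_sufficient_decrease:
  fixes D :: "real^'m^'n" and u :: "nat \<Rightarrow> real^'m"
  assumes u0: "u 0 = 0"
    and u_step: "\<And>j. j < J \<Longrightarrow> u (Suc j) = u j - subspace_step D (x + D *v u j)"
    and bounded: "\<And>v. (A x *v v) \<bullet> v \<le> \<nu> * (norm v)^2" and "\<nu> > 0"
    and descent: "g x \<bullet> column i D \<le> - \<gamma>0 * (norm (g x))^2"
    and length: "norm (column i D) \<le> \<gamma>1 * norm (g x)"
    and \<gamma>: "\<gamma>0 > 0" "\<gamma>1 > 0"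
    and "1 \<le> j" "j \<le> J"
  shows "F (x + D *v u j) \<le> F x - \<gamma>0^2 / (2 * \<nu> * \<gamma>1^2) * (norm (g x))^2"
  using \<open>1 \<le> j\<close> \<open>j \<le> J\<close>
proof (induction j)
  case (Suc j)
  have next_point: "x + D *v u (Suc j) = (x + D *v u j) - D *v subspace_step D (x + D *v u j)"
    using Suc.prems u_step by (simp add: matrix_vector_mult_diff_distrib)
  show ?case
  proof (cases "j = 0")
    case True
    then show ?thesis
      using next_point u0 subspace_step_sufficient_decrease[OF bounded \<open>\<nu> > 0\<close> descent length \<gamma>]
      by simp
  next
    case False
    then have "F (x + D *v u j) \<le> F x - \<gamma>0^2 / (2 * \<nu> * \<gamma>1^2) * (norm (g x))^2"
      using Suc by simp
    then show ?thesis
      unfolding next_point using subspace_step_nonincreasing[of "x + D *v u j" D] by linarith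
  qed
qed simp

end

section \<open>Analytic preliminaries\<close>

lemma grad_eqI:
  fixes f :: "'a::euclidean_space \<Rightarrow> real"
  assumes "(f has_derivative (\<lambda>h. g \<bullet> h)) (at x)"
  shows "grad f x = g"
  unfolding grad_def
proof (rule the_equality)
  fix g' assume "(f has_derivative (\<lambda>h. g' \<bullet> h)) (at x)"
  then have "(\<lambda>h. g' \<bullet> h) = (\<lambda>h. g \<bullet> h)"
    using has_derivative_unique assms by blast
  then have "(g' - g) \<bullet> (g' - g) = 0"
    by (metis inner_diff_left right_minus_eq)
  then show "g' = g" by simp
qed (rule assms)

lemma has_derivative_quadratic_remainder:
  fixes f :: "'a::real_normed_vector \<Rightarrow> real"
  assumes "bounded_linear f'" and remainder: "\<And>h. \<bar>f (x + h) - f x - f' h\<bar> \<le> C * (norm h)^2"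
  shows "(f has_derivative f') (at x)"
  unfolding has_derivative_at
proof (intro conjI assms)
  have "(\<lambda>h::'a. norm h) \<midarrow>0\<rightarrow> 0"
    using tendsto_norm_zero[OF tendsto_ident_at[of "0::'a" UNIV]] by simp
  then have lim: "(\<lambda>h::'a. C * norm h) \<midarrow>0\<rightarrow> 0"
    by (rule tendsto_mult_right_zero)
  have "norm (norm (f (x + h) - f x - f' h) / norm h) \<le> C * norm h" if "h \<noteq> 0" for h
    using remainder[of h] that by (simp add: divide_le_eq power2_eq_square mult.assoc)
  then have "\<forall>\<^sub>F h in at 0. norm (norm (f (x + h) - f x - f' h) / norm h) \<le> C * norm h"
    unfolding eventually_at by (auto intro!: exI[of _ 1])
  then show "(\<lambda>h. norm (f (x + h) - f x - f' h) / norm h) \<midarrow>0\<rightarrow> 0"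
    using lim by (rule Lim_null_comparison)
qed

lemma descent_lemma:
  fixes \<Phi> :: "'a::euclidean_space \<Rightarrow> real"
  assumes der: "\<And>z. (\<Phi> has_derivative (\<lambda>h. G z \<bullet> h)) (at z)"
    and lipschitz: "\<And>z w. norm (G z - G w) \<le> L * norm (z - w)"
  shows "\<Phi> (z + w) \<le> \<Phi> z + G z \<bullet> w + L / 2 * (norm w)^2"
proof -
  define \<phi> where "\<phi> t = \<Phi> (z + t *\<^sub>R w) - t * (G z \<bullet> w) - L / 2 * t^2 * (norm w)^2" for t
  have "((\<lambda>t. \<Phi> (z + t *\<^sub>R w)) has_derivative (\<lambda>h. G (z + t *\<^sub>R w) \<bullet> (h *\<^sub>R w))) (at t)"
    for t by (rule has_derivative_compose[of "\<lambda>t. z + t *\<^sub>R w", OF _ der])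
      (auto intro!: derivative_eq_intros)
  moreover have "(\<lambda>h. G (z + t *\<^sub>R w) \<bullet> (h *\<^sub>R w)) = (*) (G (z + t *\<^sub>R w) \<bullet> w)" for t
    by (rule ext) simp
  ultimately have "((\<lambda>t. \<Phi> (z + t *\<^sub>R w)) has_real_derivative G (z + t *\<^sub>R w) \<bullet> w) (at t)" for t
    by (simp add: has_field_derivative_def)
  then have \<phi>_deriv: "DERIV \<phi> t :> (G (z + t *\<^sub>R w) - G z) \<bullet> w - L * t * (norm w)^2" for t
    unfolding \<phi>_def
    by (auto intro!: derivative_eq_intros simp: power2_eq_square algebra_simps inner_diff_left)
  have "\<phi> 1 \<le> \<phi> 0"
  proof (rule DERIV_nonpos_imp_nonincreasing[of 0 1])
    fix t :: real assume "0 \<le> t" "t \<le> 1"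
    have "(G (z + t *\<^sub>R w) - G z) \<bullet> w \<le> norm (G (z + t *\<^sub>R w) - G z) * norm w"
      by (rule norm_cauchy_schwarz)
    also have "\<dots> \<le> L * norm (t *\<^sub>R w) * norm w"
      using lipschitz[of "z + t *\<^sub>R w" z] by (intro mult_right_mono) auto
    also have "\<dots> = L * t * (norm w)^2"
      using \<open>0 \<le> t\<close> by (simp add: power2_eq_square)
    finally show "\<exists>y. DERIV \<phi> t :> y \<and> y \<le> 0"
      using \<phi>_deriv[of t] by (intro exI conjI) auto
  qed simp
  then show ?thesis by (simp add: \<phi>_def)
qed

lemma concave_sqrt_tangent:
  fixes f :: "real \<Rightarrow> real"
  assumes concave: "concave_on {0..} (\<lambda>t. f (sqrt t))" and deriv: "DERIV f r :> f'"
    and "r > 0" "r' \<ge> 0"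
  shows "f r' \<le> f r + f' / (2 * r) * (r'^2 - r^2)"
proof -
  have "DERIV (\<lambda>t. - f (sqrt t)) (r^2) :> - (f' * (inverse (sqrt (r^2)) / 2))"
    using \<open>r > 0\<close> by (intro DERIV_minus DERIV_chain2[OF _ DERIV_real_sqrt]) (simp_all add: deriv)
  moreover have "convex_on {0..} (\<lambda>t. - f (sqrt t))"
    using concave by (simp add: concave_on_def)
  moreover have "connected {0::real..}" "r^2 \<in> interior {0::real..}" "r'^2 \<in> {0::real..}"
    using \<open>r > 0\<close> by (auto simp: is_interval_connected)
  ultimately have "- f (sqrt (r'^2)) - - f (sqrt (r^2)) \<ge> - (f' * (inverse (sqrt (r^2)) / 2)) * (r'^2 - r^2)"
    by (metis convex_on_imp_above_tangent has_field_derivative_at_within)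
  then show ?thesis
    using \<open>r > 0\<close> \<open>r' \<ge> 0\<close> by (simp add: field_simps)
qed

section \<open>Half-quadratic potentials\<close>

locale half_quadratic_potentials =
  fixes \<psi> :: "nat \<Rightarrow> real \<Rightarrow> real" and S :: nat
  assumes differentiable: "s \<in> {1..S} \<Longrightarrow> \<psi> s differentiable (at t)"
    and concave_sqrt: "s \<in> {1..S} \<Longrightarrow> concave_on {0..} (\<lambda>t. \<psi> s (sqrt t))"
    and deriv_bounds: "s \<in> {1..S} \<Longrightarrow> \<exists>w\<ge>0. \<forall>t>0. 0 \<le> deriv (\<psi> s) t \<and> deriv (\<psi> s) t \<le> w * t"
    and weight_limit: "s \<in> {1..S} \<Longrightarrow> \<exists>l. ((\<lambda>t. deriv (\<psi> s) t / t) \<longlongrightarrow> l) (at 0)"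
begin

lemma has_real_derivative_potential:
  "s \<in> {1..S} \<Longrightarrow> DERIV (\<psi> s) t :> deriv (\<psi> s) t"
  using differentiable DERIV_deriv_iff_real_differentiable by blast

lemma omega_tendsto:
  assumes "s \<in> {1..S}"
  shows "((\<lambda>t. deriv (\<psi> s) t / t) \<longlongrightarrow> omega \<psi> s 0) (at_right 0)"
proof -
  obtain l where "((\<lambda>t. deriv (\<psi> s) t / t) \<longlongrightarrow> l) (at 0)"
    using weight_limit[OF assms] by blast
  moreover from this have "omega \<psi> s 0 = l"
    by (simp add: omega_def tendsto_Lim)
  ultimately show ?thesis
    by (simp add: filterlim_at_split)
qed

lemma omega_bounds:
  assumes s: "s \<in> {1..S}"
  shows "\<exists>W. \<forall>t\<ge>0. 0 \<le> omega \<psi> s t \<and> omega \<psi> s t \<le> W"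
proof -
  obtain W where W0: "\<And>t. t > 0 \<Longrightarrow> 0 \<le> deriv (\<psi> s) t \<and> deriv (\<psi> s) t \<le> W * t"
    using deriv_bounds[OF s] by blast
  have W: "0 \<le> deriv (\<psi> s) t / t \<and> deriv (\<psi> s) t / t \<le> W" if "t > 0" for t
    using W0[OF that] that by (simp add: divide_le_eq mult.commute)
  have lim: "((\<lambda>t. deriv (\<psi> s) t / t) \<longlongrightarrow> omega \<psi> s 0) (at_right 0)"
    by (rule omega_tendsto[OF s])
  have ev: "\<forall>\<^sub>F t in at_right 0. 0 \<le> deriv (\<psi> s) t / t \<and> deriv (\<psi> s) t / t \<le> W"
    by (rule eventually_mono[OF eventually_at_right_less]) (rule W)
  have "0 \<le> omega \<psi> s 0"
    by (rule tendsto_lowerbound[OF lim]) (use ev in \<open>auto elim: eventually_mono\<close>)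
  moreover have "omega \<psi> s 0 \<le> W"
    by (rule tendsto_upperbound[OF lim]) (use ev in \<open>auto elim: eventually_mono\<close>)
  ultimately show ?thesis
    using W by (auto simp: omega_def intro!: exI[of _ W])
qed

lemma omega_uniformly_bounded:
  "\<exists>W. \<forall>s\<in>{1..S}. \<forall>t\<ge>0. 0 \<le> omega \<psi> s t \<and> omega \<psi> s t \<le> W"
proof -
  have "\<forall>s\<in>{1..S}. \<exists>W. \<forall>t\<ge>0. 0 \<le> omega \<psi> s t \<and> omega \<psi> s t \<le> W"
    using omega_bounds by blast
  then obtain W where W: "\<And>s t. s \<in> {1..S} \<Longrightarrow> t \<ge> 0 \<Longrightarrow> 0 \<le> omega \<psi> s t \<and> omega \<psi> s t \<le> W s"
    by (metis bchoice)
  have "W s \<le> (\<Sum>s\<in>{1..S}. W s)" if "s \<in> {1..S}" for s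
  proof (rule member_le_sum[OF that])
    show "0 \<le> W s'" if "s' \<in> {1..S} - {s}" for s'
      using W[of s' 0] that by auto
  qed simp
  then show ?thesis
    using W by (meson order_trans)
qed

lemma potential_tangent_majorant_pos:
  assumes s: "s \<in> {1..S}" and "r > 0" "r' \<ge> 0"
  shows "\<psi> s r' \<le> \<psi> s r + omega \<psi> s r / 2 * (r'^2 - r^2)"
  using concave_sqrt_tangent[OF concave_sqrt[OF s] has_real_derivative_potential[OF s] assms(2,3)]
    \<open>r > 0\<close> by (simp add: omega_def)

text \<open>At r = 0 the tangent majorant is the limit of those at r > 0, by the choice of omega \<psi> s 0.\<close>
lemma potential_tangent_majorant:
  assumes s: "s \<in> {1..S}" and "r \<ge> 0" "r' \<ge> 0"
  shows "\<psi> s r' \<le> \<psi> s r + omega \<psi> s r / 2 * (r'^2 - r^2)"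
proof (cases "r = 0")
  case True
  have "isCont (\<psi> s) 0"
    using has_real_derivative_potential[OF s] by (rule DERIV_isCont)
  then have "(\<psi> s \<longlongrightarrow> \<psi> s 0) (at_right 0)"
    by (simp add: isCont_def filterlim_at_split)
  moreover have "((\<lambda>u::real. u^2) \<longlongrightarrow> 0) (at_right 0)"
    by (intro tendsto_eq_intros) auto
  ultimately have lim: "((\<lambda>u. \<psi> s u + deriv (\<psi> s) u / u / 2 * (r'^2 - u^2))
      \<longlongrightarrow> \<psi> s 0 + omega \<psi> s 0 / 2 * (r'^2 - 0)) (at_right 0)"
    using omega_tendsto[OF s] by (intro tendsto_intros) auto
  have "\<forall>\<^sub>F u in at_right 0. \<psi> s r' \<le> \<psi> s u + deriv (\<psi> s) u / u / 2 * (r'^2 - u^2)"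
  proof (rule eventually_mono[OF eventually_at_right_less])
    fix u :: real assume "0 < u"
    then show "\<psi> s r' \<le> \<psi> s u + deriv (\<psi> s) u / u / 2 * (r'^2 - u^2)"
      using potential_tangent_majorant_pos[OF s \<open>0 < u\<close> \<open>r' \<ge> 0\<close>] by (simp add: omega_def)
  qed
  then have "\<psi> s r' \<le> \<psi> s 0 + omega \<psi> s 0 / 2 * (r'^2 - 0)"
    using tendsto_le[OF _ lim tendsto_const] by simp
  with True show ?thesis by simp
qed (use potential_tangent_majorant_pos[OF s] assms in auto)

lemma potential_ge_at_0:
  assumes s: "s \<in> {1..S}" and "r \<ge> 0"
  shows "\<psi> s 0 \<le> \<psi> s r"
proof -
  have "0 \<le> omega \<psi> s r"
    using omega_bounds[OF s] \<open>r \<ge> 0\<close> by blast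
  then have "0 \<le> omega \<psi> s r * r^2 / 2"
    by simp
  then show ?thesis
    using potential_tangent_majorant[OF s \<open>r \<ge> 0\<close> order.refl] by simp
qed

end

section \<open>The criterion and its quadratic majorant\<close>

lemma diagm_mult_vector: "diagm b *v u = (\<chi> i. b $ i * u $ i)"
proof -
  have "(\<Sum>j\<in>UNIV. (if i = j then b $ i else 0) * u $ j) = b $ i * u $ i" for i
    by (simp add: if_distrib[of "\<lambda>x. x * _"] cong: if_cong)
  then show ?thesis
    by (simp add: diagm_def matrix_vector_mult_def vec_eq_iff)
qed

lemma matrix_vector_bound: "\<exists>K>0. \<forall>v. norm ((M::real^'a^'b) *v v) \<le> K * norm v"
  using bounded_linear.pos_bounded[OF matrix_vector_mul_bounded_linear[of M]]
  by (metis mult.commute)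

locale criterion = half_quadratic_potentials \<psi> S
  for \<psi> :: "nat \<Rightarrow> real \<Rightarrow> real" and S :: nat +
  fixes \<Phi> :: "real^'q \<Rightarrow> real" and H :: "real^'n^'q" and y :: "real^'q"
    and grp :: "'p::finite \<Rightarrow> nat" and V :: "real^'n^'p" and c :: "real^'p"
    and V0 :: "real^'n^'r" and L \<mu> :: real and G :: "real^'q \<Rightarrow> real^'q"
  assumes grp_range: "grp i \<in> {1..S}"
    and L_pos: "L > 0"
    and G_deriv: "(\<Phi> has_derivative (\<lambda>h. G z \<bullet> h)) (at z)"
    and G_lipschitz: "norm (G z - G w) \<le> L * norm (z - w)"
    and mu_ge: "\<mu> \<ge> L"
begin

abbreviation F :: "real^'n \<Rightarrow> real" where
  "F \<equiv> Fdelta \<Phi> H y \<psi> S grp V c V0"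

abbreviation A :: "real^'n \<Rightarrow> real^'n^'n" where
  "A \<equiv> Amat \<mu> H V0 \<psi> grp V c"

definition block :: "nat \<Rightarrow> real^'p \<Rightarrow> real^'p" where
  "block s z = (\<chi> i. if grp i = s then z $ i else 0)"

definition residual :: "real^'n \<Rightarrow> real^'p" where
  "residual x = V *v x - c"

definition weights :: "real^'n \<Rightarrow> real^'p" where
  "weights x = (\<chi> i. omega \<psi> (grp i) (blk_norm grp (grp i) (residual x)))"

definition gradient :: "real^'n \<Rightarrow> real^'n" where
  "gradient x = transpose H *v G (H *v x - y) + transpose V *v (\<chi> i. weights x $ i * residual x $ i)
     + 2 *\<^sub>R (transpose V0 *v (V0 *v x))"

lemma inner_block: "block s z \<bullet> w = (\<Sum>i\<in>UNIV. if grp i = s then z $ i * w $ i else 0)"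
  unfolding inner_vec_def by (intro sum.cong refl) (simp add: block_def)

lemma blk_norm_eq_norm_block: "blk_norm grp s z = norm (block s z)"
proof -
  have "(\<Sum>i\<in>{i. grp i = s}. (z $ i)^2) = block s z \<bullet> block s z"
    by (simp add: inner_block sum.If_cases power2_eq_square Int_def) (simp add: block_def)
  then show ?thesis
    by (simp add: blk_norm_def norm_eq_sqrt_inner)
qed

lemma block_add: "block s (a + b) = block s a + block s b"
  by (simp add: block_def vec_eq_iff)

lemma inner_block_block: "block s z \<bullet> block s w = block s z \<bullet> w"
  unfolding inner_vec_def by (intro sum.cong refl) (simp add: block_def)

lemma inner_block_commute: "block s a \<bullet> b = block s b \<bullet> a"
  unfolding inner_block by (intro sum.cong refl) (simp add: mult.commute)

lemma bounded_linear_block: "bounded_linear (block s)"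
  unfolding linear_conv_bounded_linear[symmetric]
  by (rule linearI) (simp_all add: block_def vec_eq_iff)

lemma norm_block_le: "norm (block s z) \<le> norm z"
  unfolding norm_le inner_vec_def by (intro sum_mono) (simp add: block_def)

lemma sum_blocks:
  "(\<Sum>s\<in>{1..S}. a s * (block s z \<bullet> w)) = (\<Sum>i\<in>UNIV. a (grp i) * (z $ i * w $ i))"
proof -
  have "(\<Sum>s\<in>{1..S}. a s * (block s z \<bullet> w))
      = (\<Sum>s\<in>{1..S}. \<Sum>i\<in>UNIV. if grp i = s then a s * (z $ i * w $ i) else 0)"
    by (simp add: inner_block sum_distrib_left if_distrib cong: if_cong)
  also have "\<dots> = (\<Sum>i\<in>UNIV. \<Sum>s\<in>{1..S}. if grp i = s then a s * (z $ i * w $ i) else 0)"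
    by (rule sum.swap)
  also have "\<dots> = (\<Sum>i\<in>UNIV. a (grp i) * (z $ i * w $ i))"
    using grp_range by (intro sum.cong refl) (simp add: sum.delta)
  finally show ?thesis .
qed

lemma weights_eq: "weights x $ i = omega \<psi> (grp i) (norm (block (grp i) (residual x)))"
  by (simp add: weights_def blk_norm_eq_norm_block)

lemma weights_nonneg: "0 \<le> weights x $ i"
  using omega_bounds[OF grp_range[of i]] unfolding weights_eq by (meson norm_ge_zero)

lemma weights_bounded: "\<exists>W. \<forall>x i. weights x $ i \<le> W"
proof -
  obtain W where "\<forall>s\<in>{1..S}. \<forall>t\<ge>0. 0 \<le> omega \<psi> s t \<and> omega \<psi> s t \<le> W"
    using omega_uniformly_bounded by blast
  then have "weights x $ i \<le> W" for x i
    using grp_range[of i] by (simp add: weights_eq)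
  then show ?thesis by blast
qed

lemma Amat_inner:
  "(A x *v v) \<bullet> w = \<mu> * ((H *v v) \<bullet> (H *v w)) + 2 * ((V0 *v v) \<bullet> (V0 *v w))
      + (\<Sum>i\<in>UNIV. weights x $ i * ((V *v v) $ i * (V *v w) $ i))"
proof -
  have "(diagm (weights x) *v (V *v v)) \<bullet> (V *v w)
      = (\<Sum>i\<in>UNIV. weights x $ i * ((V *v v) $ i * (V *v w) $ i))"
    by (simp add: diagm_mult_vector inner_vec_def mult.assoc)
  then show ?thesis
    unfolding Amat_def weights_def[symmetric] residual_def[symmetric]
    by (simp add: matrix_vector_mult_add_rdistrib inner_add_left inner_transpose_matrix_vector
        flip: scaleR_matrix_vector_assoc matrix_vector_mul_assoc)
qed

lemma Amat_symmetric: "transpose (A x) = A x"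
  unfolding symmetric_matrix_iff
proof (intro allI)
  fix v w
  have "v \<bullet> (A x *v w) = (A x *v w) \<bullet> v"
    by (rule inner_commute)
  then show "(A x *v v) \<bullet> w = v \<bullet> (A x *v w)"
    by (simp only: Amat_inner) (simp add: inner_commute mult.commute)
qed

lemma weighted_square_sum_nonneg: "0 \<le> (\<Sum>i\<in>UNIV. weights x $ i * (z $ i * z $ i))"
  using weights_nonneg by (intro sum_nonneg) simp

lemma Amat_nonneg: "0 \<le> (A x *v v) \<bullet> v"
  using weighted_square_sum_nonneg[of x "V *v v"] mu_ge L_pos by (simp add: Amat_inner)

lemma Amat_bounded: "\<exists>\<nu>>0. \<forall>x v. (A x *v v) \<bullet> v \<le> \<nu> * (norm v)^2"
proof -
  have square_bound: "\<exists>K. \<forall>v. (M *v v) \<bullet> (M *v v) \<le> K * (norm v)^2" for M :: "real^'n^'z"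
  proof -
    obtain K where "\<forall>v. norm (M *v v) \<le> K * norm v" using matrix_vector_bound by blast
    then have "(M *v v) \<bullet> (M *v v) \<le> K^2 * (norm v)^2" for v
      by (metis norm_ge_zero power2_norm_eq_inner power_mono power_mult_distrib)
    then show ?thesis by blast
  qed
  obtain K1 K2 K3 where K: "\<And>v. (H *v v) \<bullet> (H *v v) \<le> K1 * (norm v)^2"
    "\<And>v. (V0 *v v) \<bullet> (V0 *v v) \<le> K2 * (norm v)^2" "\<And>v. (V *v v) \<bullet> (V *v v) \<le> K3 * (norm v)^2"
    using square_bound by metis
  obtain W where W: "\<And>x i. weights x $ i \<le> W" using weights_bounded by blast
  then have "0 \<le> W" using weights_nonneg order_trans by blast
  define C where "C = \<mu> * K1 + 2 * K2 + W * K3"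
  have "(A x *v v) \<bullet> v \<le> C * (norm v)^2" for x v
  proof -
    have "\<mu> * ((H *v v) \<bullet> (H *v v)) \<le> \<mu> * (K1 * (norm v)^2)"
      using K(1) mu_ge L_pos by (intro mult_left_mono) auto
    moreover have "(\<Sum>i\<in>UNIV. weights x $ i * ((V *v v) $ i * (V *v v) $ i))
        \<le> (\<Sum>i\<in>UNIV. W * ((V *v v) $ i * (V *v v) $ i))"
      using W by (intro sum_mono mult_right_mono) auto
    moreover have "(\<Sum>i\<in>UNIV. W * ((V *v v) $ i * (V *v v) $ i)) = W * ((V *v v) \<bullet> (V *v v))"
      by (simp add: inner_vec_def sum_distrib_left)
    moreover have "W * ((V *v v) \<bullet> (V *v v)) \<le> W * (K3 * (norm v)^2)"
      using K(3) \<open>0 \<le> W\<close> by (intro mult_left_mono) auto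
    ultimately have "(A x *v v) \<bullet> v \<le> \<mu> * (K1 * (norm v)^2) + 2 * (K2 * (norm v)^2) + W * (K3 * (norm v)^2)"
      using K(2)[of v] unfolding Amat_inner by linarith
    then show ?thesis
      by (simp add: C_def algebra_simps)
  qed
  moreover have "C * (norm v)^2 \<le> (\<bar>C\<bar> + 1) * (norm v)^2" for v
    by (intro mult_right_mono) auto
  ultimately show ?thesis
    by (intro exI[of _ "\<bar>C\<bar> + 1"]) (auto intro: order_trans)
qed

lemma gradient_inner:
  "gradient x \<bullet> h = G (H *v x - y) \<bullet> (H *v h)
     + (\<Sum>i\<in>UNIV. weights x $ i * (residual x $ i * (V *v h) $ i)) + 2 * ((V0 *v x) \<bullet> (V0 *v h))"
proof -
  have "(\<chi> i. weights x $ i * residual x $ i) \<bullet> (V *v h)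
      = (\<Sum>i\<in>UNIV. weights x $ i * (residual x $ i * (V *v h) $ i))"
    by (simp add: inner_vec_def mult.assoc)
  then show ?thesis
    by (simp add: gradient_def inner_add_left inner_transpose_matrix_vector)
qed

lemma gradient_orthogonal_Amat_kernel:
  assumes "(A x *v h) \<bullet> h = 0"
  shows "gradient x \<bullet> h = 0"
proof -
  have "\<mu> > 0" using mu_ge L_pos by simp
  then have "0 \<le> \<mu> * ((H *v h) \<bullet> (H *v h))" "0 \<le> (V0 *v h) \<bullet> (V0 *v h)" by simp_all
  then have "\<mu> * ((H *v h) \<bullet> (H *v h)) = 0" "(V0 *v h) \<bullet> (V0 *v h) = 0"
    and "(\<Sum>i\<in>UNIV. weights x $ i * ((V *v h) $ i * (V *v h) $ i)) = 0"
    using assms weighted_square_sum_nonneg[of x "V *v h"] unfolding Amat_inner by linarith+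
  then have "H *v h = 0" "V0 *v h = 0"
    and "(\<Sum>i\<in>UNIV. weights x $ i * ((V *v h) $ i * (V *v h) $ i)) = 0"
    using \<open>\<mu> > 0\<close> by simp_all
  moreover from this(3) have "weights x $ i * (V *v h) $ i = 0" for i
    using weights_nonneg by (subst (asm) sum_nonneg_eq_0_iff) auto
  then have "weights x $ i * (residual x $ i * (V *v h) $ i) = 0" for i
    by (metis mult.left_commute mult_zero_right)
  then have "(\<Sum>i\<in>UNIV. weights x $ i * (residual x $ i * (V *v h) $ i)) = 0"
    by (simp only: sum.neutral_const)
  ultimately show ?thesis
    by (simp add: gradient_inner)
qed

lemma has_derivative_residual: "(residual has_derivative (\<lambda>h. V *v h)) (at x)"
  unfolding residual_def[abs_def]
  by (auto intro!: derivative_eq_intros bounded_linear_imp_has_derivative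
      matrix_vector_mul_bounded_linear)

lemma has_derivative_potential_nonzero:
  assumes s: "s \<in> {1..S}" and "block s (residual x) \<noteq> 0"
  shows "((\<lambda>x. \<psi> s (norm (block s (residual x)))) has_derivative
           (\<lambda>h. omega \<psi> s (norm (block s (residual x))) * (block s (residual x) \<bullet> (V *v h)))) (at x)"
proof -
  define w where "w = block s (residual x)"
  have inner: "((\<lambda>x. block s (residual x)) has_derivative (\<lambda>h. block s (V *v h))) (at x)"
    by (rule bounded_linear.has_derivative[OF bounded_linear_block has_derivative_residual])
  have "(norm has_derivative (\<lambda>h. h \<bullet> sgn w)) (at (block s (residual x)))"
    using has_derivative_norm[of w] assms(2) by (simp add: w_def)
  then have "((\<lambda>x. norm (block s (residual x))) has_derivative (\<lambda>h. block s (V *v h) \<bullet> sgn w)) (at x)"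
    by (rule has_derivative_compose[OF inner])
  moreover have "(\<psi> s has_derivative (\<lambda>h. deriv (\<psi> s) (norm w) * h)) (at (norm (block s (residual x))))"
    using has_real_derivative_potential[OF s, of "norm w"] by (simp add: has_field_derivative_def w_def)
  ultimately have "((\<lambda>x. \<psi> s (norm (block s (residual x)))) has_derivative
      (\<lambda>h. deriv (\<psi> s) (norm w) * (block s (V *v h) \<bullet> sgn w))) (at x)"
    by (rule has_derivative_compose)
  moreover have "deriv (\<psi> s) (norm w) * (block s (V *v h) \<bullet> sgn w) = omega \<psi> s (norm w) * (w \<bullet> (V *v h))"
    for h
    using assms(2) by (simp add: omega_def sgn_div_norm w_def inner_block_commute[of s "V *v h"]
        inner_block_block divide_inverse ac_simps)
  ultimately show ?thesis by (simp add: w_def)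
qed

text \<open>At a zero block the potential is flat to second order: 0 \<le> \<psi> r - \<psi> 0 \<le> W r^2 / 2.\<close>
lemma has_derivative_potential_zero:
  assumes s: "s \<in> {1..S}" and zero: "block s (residual x) = 0"
  shows "((\<lambda>x. \<psi> s (norm (block s (residual x)))) has_derivative (\<lambda>h. 0)) (at x)"
proof -
  obtain K where K: "\<And>v. norm (V *v v) \<le> K * norm v" using matrix_vector_bound by blast
  obtain W where W: "\<And>t. t \<ge> 0 \<Longrightarrow> 0 \<le> omega \<psi> s t \<and> omega \<psi> s t \<le> W"
    using omega_bounds[OF s] by blast
  have "\<bar>\<psi> s (norm (block s (residual (x + h)))) - \<psi> s (norm (block s (residual x))) - 0\<bar>
      \<le> (W / 2 * K^2) * (norm h)^2" for h
  proof -
    define r where "r = norm (block s (V *v h))"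
    have r: "0 \<le> r" "r \<le> K * norm h"
      using norm_block_le[of s "V *v h"] K[of h] by (simp_all add: r_def)
    have "residual (x + h) = V *v h + residual x"
      by (simp add: residual_def matrix_vector_right_distrib)
    then have "block s (residual (x + h)) = block s (V *v h)"
      using zero by (simp add: block_add)
    then have "\<bar>\<psi> s (norm (block s (residual (x + h)))) - \<psi> s (norm (block s (residual x))) - 0\<bar>
        = \<psi> s r - \<psi> s 0"
      using potential_ge_at_0[OF s r(1)] zero by (simp add: r_def)
    also have "\<dots> \<le> W / 2 * r^2"
    proof -
      have "omega \<psi> s 0 / 2 * r^2 \<le> W / 2 * r^2"
        using W[of 0] by (intro mult_right_mono) auto
      then show ?thesis
        using potential_tangent_majorant[OF s order.refl r(1)] by simp
    qed
    also have "\<dots> \<le> W / 2 * (K * norm h)^2"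
      using r W[of 0] by (intro mult_left_mono power_mono) auto
    finally show ?thesis
      by (simp add: power_mult_distrib)
  qed
  then show ?thesis
    by (rule has_derivative_quadratic_remainder[OF bounded_linear_zero])
qed

lemma has_derivative_potential:
  assumes "s \<in> {1..S}"
  shows "((\<lambda>x. \<psi> s (blk_norm grp s (residual x))) has_derivative
           (\<lambda>h. omega \<psi> s (norm (block s (residual x))) * (block s (residual x) \<bullet> (V *v h)))) (at x)"
  using has_derivative_potential_nonzero[OF assms] has_derivative_potential_zero[OF assms]
  by (cases "block s (residual x) = 0") (simp_all add: blk_norm_eq_norm_block)

lemma Fdelta_eq: "F x = \<Phi> (H *v x - y) + (\<Sum>s\<in>{1..S}. \<psi> s (blk_norm grp s (residual x)))
    + (V0 *v x) \<bullet> (V0 *v x)"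
  by (simp add: Fdelta_def residual_def power2_norm_eq_inner)

lemma has_derivative_Fdelta: "(F has_derivative (\<lambda>h. gradient x \<bullet> h)) (at x)"
proof -
  have affine: "((\<lambda>x. H *v x - y) has_derivative (\<lambda>h. H *v h)) (at x)"
    by (auto intro!: derivative_eq_intros bounded_linear_imp_has_derivative
        matrix_vector_mul_bounded_linear)
  have "(F has_derivative (\<lambda>h. G (H *v x - y) \<bullet> (H *v h)
      + (\<Sum>s\<in>{1..S}. omega \<psi> s (norm (block s (residual x))) * (block s (residual x) \<bullet> (V *v h)))
      + ((V0 *v x) \<bullet> (V0 *v h) + (V0 *v h) \<bullet> (V0 *v x)))) (at x)"
    unfolding Fdelta_eq[abs_def]
    by (intro has_derivative_add has_derivative_compose[OF affine G_deriv] has_derivative_sum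
        has_derivative_potential has_derivative_inner bounded_linear_imp_has_derivative
        matrix_vector_mul_bounded_linear)
  moreover have "G (H *v x - y) \<bullet> (H *v h)
      + (\<Sum>s\<in>{1..S}. omega \<psi> s (norm (block s (residual x))) * (block s (residual x) \<bullet> (V *v h)))
      + ((V0 *v x) \<bullet> (V0 *v h) + (V0 *v h) \<bullet> (V0 *v x)) = gradient x \<bullet> h" for h
    unfolding gradient_inner sum_blocks weights_eq by (simp add: inner_commute)
  ultimately show ?thesis
    by simp
qed

lemma grad_Fdelta: "grad F x = gradient x"
  by (rule grad_eqI[OF has_derivative_Fdelta])

lemma potential_majorant:
  assumes "s \<in> {1..S}"
  shows "\<psi> s (norm (block s (z + w))) \<le> \<psi> s (norm (block s z))
     + omega \<psi> s (norm (block s z)) * (block s z \<bullet> w) + omega \<psi> s (norm (block s z)) / 2 * (block s w \<bullet> w)"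
proof -
  have "(norm (block s (z + w)))^2 - (norm (block s z))^2 = 2 * (block s z \<bullet> w) + block s w \<bullet> w"
    by (simp add: block_add power2_norm_eq_inner inner_add_left inner_add_right inner_block_block
        inner_block_commute[of s w z] inner_commute[of "block s w" "block s z"])
  then show ?thesis
    using potential_tangent_majorant[OF assms norm_ge_zero[of "block s z"] norm_ge_zero[of "block s (z + w)"]]
    by (simp add: algebra_simps)
qed

lemma potentials_majorant:
  "(\<Sum>s\<in>{1..S}. \<psi> s (blk_norm grp s (residual (x + h))))
     \<le> (\<Sum>s\<in>{1..S}. \<psi> s (blk_norm grp s (residual x)))
       + (\<Sum>i\<in>UNIV. weights x $ i * (residual x $ i * (V *v h) $ i))
       + 1/2 * (\<Sum>i\<in>UNIV. weights x $ i * ((V *v h) $ i * (V *v h) $ i))"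
proof -
  define z w where "z = residual x" and "w = V *v h"
  have residual_sum: "residual (x + h) = z + w"
    by (simp add: z_def w_def residual_def matrix_vector_right_distrib)
  have "(\<Sum>s\<in>{1..S}. \<psi> s (blk_norm grp s (residual (x + h))))
      \<le> (\<Sum>s\<in>{1..S}. \<psi> s (norm (block s z)) + omega \<psi> s (norm (block s z)) * (block s z \<bullet> w)
          + omega \<psi> s (norm (block s z)) / 2 * (block s w \<bullet> w))"
    unfolding blk_norm_eq_norm_block residual_sum by (intro sum_mono potential_majorant) auto
  also have "\<dots> = (\<Sum>s\<in>{1..S}. \<psi> s (norm (block s z)))
      + (\<Sum>s\<in>{1..S}. omega \<psi> s (norm (block s z)) * (block s z \<bullet> w))
      + (\<Sum>s\<in>{1..S}. omega \<psi> s (norm (block s z)) / 2 * (block s w \<bullet> w))"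
    by (simp only: sum.distrib)
  also have "\<dots> = (\<Sum>s\<in>{1..S}. \<psi> s (norm (block s z)))
      + (\<Sum>i\<in>UNIV. weights x $ i * (z $ i * w $ i)) + 1/2 * (\<Sum>i\<in>UNIV. weights x $ i * (w $ i * w $ i))"
    unfolding sum_blocks by (simp add: weights_eq z_def sum_distrib_left)
  finally show ?thesis
    by (simp add: z_def w_def blk_norm_eq_norm_block)
qed

lemma Fdelta_majorant: "F (x + h) \<le> F x + gradient x \<bullet> h + 1/2 * ((A x *v h) \<bullet> h)"
proof -
  have "\<Phi> (H *v (x + h) - y) \<le> \<Phi> (H *v x - y) + G (H *v x - y) \<bullet> (H *v h) + L / 2 * (norm (H *v h))^2"
    using descent_lemma[OF G_deriv G_lipschitz, of "H *v x - y" "H *v h"]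
    by (simp add: matrix_vector_right_distrib algebra_simps)
  also have "\<dots> \<le> \<Phi> (H *v x - y) + G (H *v x - y) \<bullet> (H *v h) + \<mu> / 2 * ((H *v h) \<bullet> (H *v h))"
    using mu_ge by (simp add: power2_norm_eq_inner mult_right_mono)
  moreover have "(V0 *v (x + h)) \<bullet> (V0 *v (x + h))
      = (V0 *v x) \<bullet> (V0 *v x) + 2 * ((V0 *v x) \<bullet> (V0 *v h)) + (V0 *v h) \<bullet> (V0 *v h)"
    by (simp add: matrix_vector_right_distrib inner_add_left inner_add_right inner_commute)
  moreover have "1/2 * ((A x *v h) \<bullet> h) = \<mu> / 2 * ((H *v h) \<bullet> (H *v h)) + (V0 *v h) \<bullet> (V0 *v h)
      + 1/2 * (\<Sum>i\<in>UNIV. weights x $ i * ((V *v h) $ i * (V *v h) $ i))"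
    by (simp add: Amat_inner algebra_simps)
  ultimately show ?thesis
    using potentials_majorant[of x h] unfolding Fdelta_eq gradient_inner by linarith
qed

sublocale quadratic_majorant F gradient A
  by unfold_locales
    (rule Fdelta_majorant Amat_symmetric Amat_nonneg gradient_orthogonal_Amat_kernel, assumption?)+

end

theorem lemma2:
  fixes \<Phi> :: "real^'q \<Rightarrow> real" and H :: "real^'n^'q" and y :: "real^'q"
    and \<psi> :: "nat \<Rightarrow> real \<Rightarrow> real" and S J :: nat and grp :: "'p::finite \<Rightarrow> nat"
    and V :: "real^'n^'p" and c :: "real^'p" and V0 :: "real^'n^'r"
    and L \<mu> \<gamma>0 \<gamma>1 :: real
    and x :: "nat \<Rightarrow> real^'n" and D :: "nat \<Rightarrow> real^'m^'n" and u :: "nat \<Rightarrow> nat \<Rightarrow> real^'m"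
    and i0 :: 'm
  assumes S_pos: "S \<ge> 1" and J_pos: "J \<ge> 1"
    and M_le_N: "CARD('m) \<le> CARD('n)"
    and H_nz: "H \<noteq> 0"
    and grp_range: "\<forall>i. grp i \<in> {1..S}"
    and blocks_nonempty: "\<forall>s\<in>{1..S}. \<exists>i. grp i = s"
    and L_pos: "L > 0"
    and A3i: "\<exists>G. (\<forall>z. (\<Phi> has_derivative (\<lambda>h. G z \<bullet> h)) (at z))
                 \<and> (\<forall>z w. norm (G z - G w) \<le> L * norm (z - w))"
    and A3ii: "\<forall>s\<in>{1..S}. \<forall>t. \<psi> s differentiable (at t)"
    and A3iii: "\<forall>s\<in>{1..S}. concave_on {0..} (\<lambda>t. \<psi> s (sqrt t))"
    and A3iv: "\<forall>s\<in>{1..S}. (\<exists>\<omega>b \<ge> 0. \<forall>t>0. 0 \<le> deriv (\<psi> s) t \<and> deriv (\<psi> s) t \<le> \<omega>b * t)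
                          \<and> (\<exists>l. ((\<lambda>t. deriv (\<psi> s) t / t) \<longlongrightarrow> l) (at 0))"
    and mu_ge: "\<mu> \<ge> L"
    and u0: "\<forall>k. u k 0 = 0"
    and u_step: "\<forall>k j. j < J \<longrightarrow>
        u k (Suc j) = u k j
          - pinv (transpose (D k) ** Amat \<mu> H V0 \<psi> grp V c (x k + D k *v u k j) ** D k)
            *v (transpose (D k) *v grad (Fdelta \<Phi> H y \<psi> S grp V c V0) (x k + D k *v u k j))"
    and x_step: "\<forall>k. x (Suc k) = x k + D k *v u k J"
    and gamma_pos: "\<gamma>0 > 0" "\<gamma>1 > 0"
    and A4: "\<forall>k. grad (Fdelta \<Phi> H y \<psi> S grp V c V0) (x k) \<bullet> column i0 (D k)
                   \<le> - \<gamma>0 * (norm (grad (Fdelta \<Phi> H y \<psi> S grp V c V0) (x k)))^2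
               \<and> norm (column i0 (D k)) \<le> \<gamma>1 * norm (grad (Fdelta \<Phi> H y \<psi> S grp V c V0) (x k))"
  shows "\<exists>\<nu>>0. \<forall>k. \<forall>j\<in>{1..J}.
           Fdelta \<Phi> H y \<psi> S grp V c V0 (x k) - Fdelta \<Phi> H y \<psi> S grp V c V0 (x k + D k *v u k j)
             \<ge> \<gamma>0^2 / \<gamma>1 * inverse \<nu> * (norm (grad (Fdelta \<Phi> H y \<psi> S grp V c V0) (x k)))^2"
proof -
  obtain G where G: "\<And>z. (\<Phi> has_derivative (\<lambda>h. G z \<bullet> h)) (at z)"
    "\<And>z w. norm (G z - G w) \<le> L * norm (z - w)"
    using A3i by blast
  interpret criterion \<psi> S \<Phi> H y grp V c V0 L \<mu> G
    using A3ii A3iii A3iv grp_range L_pos G mu_ge by unfold_locales auto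
  obtain \<nu> where \<nu>: "\<nu> > 0" "\<And>x v. (A x *v v) \<bullet> v \<le> \<nu> * (norm v)^2"
    using Amat_bounded by blast
  show ?thesis
  proof (intro exI[of _ "2 * \<nu> * \<gamma>1"] conjI allI ballI)
    show "2 * \<nu> * \<gamma>1 > 0" using \<nu> gamma_pos by simp
    fix k j assume "j \<in> {1..J}"
    have step: "u k (Suc i) = u k i - subspace_step (D k) (x k + D k *v u k i)" if "i < J" for i
      using u_step that by (simp add: subspace_step_def grad_Fdelta)
    have "F (x k + D k *v u k j) \<le> F (x k) - \<gamma>0^2 / (2 * \<nu> * \<gamma>1^2) * (norm (gradient (x k)))^2"
      using subspace_iterates_sufficient_decrease[where u="u k" and D="D k" and x="x k" and i=i0,
          OF u0[rule_format] step \<nu>(2) \<nu>(1) _ _ gamma_pos] A4 \<open>j \<in> {1..J}\<close>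
      by (simp add: grad_Fdelta)
    moreover have "\<gamma>0^2 / \<gamma>1 * inverse (2 * \<nu> * \<gamma>1) = \<gamma>0^2 / (2 * \<nu> * \<gamma>1^2)"
      by (simp add: power2_eq_square field_simps)
    ultimately show "F (x k) - F (x k + D k *v u k j)
        \<ge> \<gamma>0^2 / \<gamma>1 * inverse (2 * \<nu> * \<gamma>1) * (norm (grad F (x k)))^2"
      by (simp add: grad_Fdelta)
  qed
qed

end
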